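(* Let $k$ be a field of characteristic zero and $a,b\in k^{*}$ such that the quadratic form $\langle 1,-a\rangle\langle 1,b\rangle$ is anisotropic over $k$. Let $\mathcal{L}$ be a finite extension of $k(T)$, and let $\mathfrak{T}$ be a prime of $\mathcal{L}$ above $T$ which is unramified over $k(T)$ and whose residue field is $k$. Let $g\in k(T)^{*}$ be such that $\operatorname{ord}_T(g)$ is non-negative and even. Then at least one of the two quadratic forms $$q_1=\langle T,-aT,-1,-g\rangle\langle 1,b\rangle,\qquad q_2=\langle T,-aT,-1,-ag\rangle\langle 1,b\rangle$$ is anisotropic over $\mathcal{L}$.
   Context: $\langle c_1,\dots,c_n\rangle$ denotes the diagonal quadratic form $c_1x_1^2+\dots+c_nx_n^2$, and the product $\langle c_1,\dots,c_n\rangle\langle d_1,\dots,d_m\rangle$ denotes the tensor product form $\langle c_id_j\rangle_{i,j}$. A form is isotropic over a field if it has a nontrivial zero there, and anisotropic otherwise. A prime above $T$ is a place of $\mathcal{L}$ over the zero of $T$ in $k(T)$; $\operatorname{ord}_T$ is the normalized valuation of $k(T)$ at $T$. *)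

theory Defs
  imports "HOL-Computational_Algebra.Polynomial" "HOL-Computational_Algebra.Fraction_Field"
begin

text \<open>The rational function field k(T) is modelled as the type ('k poly) fract.\<close>

definition varT :: "'k::field poly fract" where
  "varT = Fract [:0, 1:] 1"

definition constK :: "'k::field \<Rightarrow> 'k poly fract" where
  "constK c = Fract [:c:] 1"

definition ordT :: "'k::field poly fract \<Rightarrow> int" where
  "ordT g = (THE n. \<exists>p q. p \<noteq> 0 \<and> q \<noteq> 0 \<and> g = Fract p q \<and>
                         n = int (order 0 p) - int (order 0 q))"

text \<open>Diagonal quadratic forms as coefficient lists; tensor product of diagonal forms.\<close>
definition qf_tensor :: "'a::comm_ring_1 list \<Rightarrow> 'a list \<Rightarrow> 'a list" where
  "qf_tensor cs ds = concat (map (\<lambda>c. map (\<lambda>d. c * d) ds) cs)"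

definition qf_isotropic :: "'a::field list \<Rightarrow> bool" where
  "qf_isotropic cs \<longleftrightarrow> (\<exists>xs. length xs = length cs \<and> (\<exists>x\<in>set xs. x \<noteq> 0) \<and>
      sum_list (map2 (\<lambda>c x. c * x\<^sup>2) cs xs) = 0)"

definition qf_anisotropic :: "'a::field list \<Rightarrow> bool" where
  "qf_anisotropic cs \<longleftrightarrow> \<not> qf_isotropic cs"

definition field_embedding :: "('a::field \<Rightarrow> 'b::field) \<Rightarrow> bool" where
  "field_embedding \<phi> \<longleftrightarrow> \<phi> 1 = 1 \<and> (\<forall>x y. \<phi> (x + y) = \<phi> x + \<phi> y) \<and>
      (\<forall>x y. \<phi> (x * y) = \<phi> x * \<phi> y)"

definition finite_extension :: "('a::field \<Rightarrow> 'b::field) \<Rightarrow> bool" where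
  "finite_extension \<phi> \<longleftrightarrow> field_embedding \<phi> \<and>
     (\<exists>B. finite B \<and> (\<forall>x. \<exists>c. x = (\<Sum>b\<in>B. \<phi> (c b) * b)))"

text \<open>A discrete valuation L* \<rightarrow> Z (values on 0 are irrelevant).\<close>
definition discrete_valuation :: "('b::field \<Rightarrow> int) \<Rightarrow> bool" where
  "discrete_valuation v \<longleftrightarrow>
     (\<forall>x y. x \<noteq> 0 \<and> y \<noteq> 0 \<longrightarrow> v (x * y) = v x + v y) \<and>
     (\<forall>x y. x \<noteq> 0 \<and> y \<noteq> 0 \<and> x + y \<noteq> 0 \<longrightarrow> min (v x) (v y) \<le> v (x + y))"

text \<open>A prime of L above T, unramified over k(T): its normalized valuation restricts to ord_T
  (ramification index 1).\<close>
definition unramified_prime_above_T :: "('k::field poly fract \<Rightarrow> 'L::field) \<Rightarrow> ('L \<Rightarrow> int) \<Rightarrow> bool" where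
  "unramified_prime_above_T \<phi> v \<longleftrightarrow> discrete_valuation v \<and>
     (\<forall>g. g \<noteq> 0 \<longrightarrow> v (\<phi> g) = ordT g)"

text \<open>The residue field of the prime is k: every element of the valuation ring is congruent to a
  constant of k modulo the maximal ideal.\<close>
definition residue_field_is_k :: "('k::field poly fract \<Rightarrow> 'L::field) \<Rightarrow> ('L \<Rightarrow> int) \<Rightarrow> bool" where
  "residue_field_is_k \<phi> v \<longleftrightarrow>
     (\<forall>x. x \<noteq> 0 \<and> 0 \<le> v x \<longrightarrow>
        (\<exists>c. x = \<phi> (constK c) \<or> (x - \<phi> (constK c) \<noteq> 0 \<and> 0 < v (x - \<phi> (constK c)))))"

end

theory Submission
  imports Defs
begin

text \<open>Write \<open>g = u (T\<^sup>m)\<^sup>2\<close> in \<open>\<L>\<close> with \<open>u\<close> a unit of residue \<open>c \<noteq> 0\<close>. Since \<open>\<langle>1,-a\<rangle>\<langle>1,b\<rangle>\<close> is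
  anisotropic, \<open>a\<close> is not a norm from \<open>k(\<surd>-b)\<close>, so \<open>\<langle>1,c\<rangle>\<langle>1,b\<rangle>\<close> or \<open>\<langle>1,ac\<rangle>\<langle>1,b\<rangle>\<close> is
  anisotropic over \<open>k\<close>; take \<open>e = c\<close> resp. \<open>e = ac\<close> accordingly. Up to squares the corresponding
  \<open>q\<^sub>i\<close> is \<open>T\<langle>1,b,-a,-ab\<rangle> \<perp> -\<langle>1,b,U,Ub\<rangle>\<close> with \<open>U\<close> a unit of residue \<open>e\<close>. Both summands have
  unit coefficients whose residue forms are anisotropic, so (Springer) every nonzero value of
  either has even valuation; as \<open>T\<close> is a uniformizer, the two parts can never cancel.\<close>

lemma ordT_Fract:
  fixes p q :: "'k::field poly"
  assumes "p \<noteq> 0" "q \<noteq> 0"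
  shows "ordT (Fract p q) = int (order 0 p) - int (order 0 q)"
  unfolding ordT_def
proof (rule the_equality)
  show "\<exists>p' q'. p' \<noteq> 0 \<and> q' \<noteq> 0 \<and> Fract p q = Fract p' q' \<and>
      int (order 0 p) - int (order 0 q) = int (order 0 p') - int (order 0 q')"
    using assms by blast
next
  fix n
  assume "\<exists>p' q'. p' \<noteq> 0 \<and> q' \<noteq> 0 \<and> Fract p q = Fract p' q' \<and>
      n = int (order 0 p') - int (order 0 q')"
  then obtain p' q' where pq': "p' \<noteq> 0" "q' \<noteq> 0" "Fract p q = Fract p' q'"
      "n = int (order 0 p') - int (order 0 q')"
    by blast
  then have "p * q' = p' * q"
    using assms eq_fract by metis
  then have "order 0 p + order 0 q' = order 0 p' + order 0 q"
    using pq' assms by (metis mult_eq_0_iff order_mult)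
  then show "n = int (order 0 p) - int (order 0 q)"
    using pq' by linarith
qed

lemma varT_nonzero: "varT \<noteq> (0 :: 'k::field poly fract)"
  unfolding varT_def by (simp add: Zero_fract_def eq_fract)

lemma ordT_varT: "ordT (varT :: 'k::field poly fract) = 1"
proof -
  have "order 0 [:0, 1::'k:] = 1"
    using order_power_n_n[of "0::'k" 1] by simp
  then show ?thesis
    unfolding varT_def by (simp add: ordT_Fract)
qed

lemma constK_nonzero: "(c::'k::field) \<noteq> 0 \<Longrightarrow> constK c \<noteq> 0"
  unfolding constK_def by (simp add: Zero_fract_def eq_fract)

lemma ordT_constK: "(c::'k::field) \<noteq> 0 \<Longrightarrow> ordT (constK c) = 0"
  unfolding constK_def by (simp add: ordT_Fract order_0I)

lemma field_embedding_constK: "field_embedding (constK :: 'k::field \<Rightarrow> 'k poly fract)"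
  unfolding field_embedding_def constK_def by (simp add: One_fract_def one_pCons mult.commute)

lemma field_embedding_comp:
  "field_embedding f \<Longrightarrow> field_embedding g \<Longrightarrow> field_embedding (\<lambda>x. g (f x))"
  unfolding field_embedding_def by simp

context
  fixes \<phi> :: "'a::field \<Rightarrow> 'b::field"
  assumes \<phi>: "field_embedding \<phi>"
begin

lemma field_embedding_add: "\<phi> (x + y) = \<phi> x + \<phi> y"
  and field_embedding_mult: "\<phi> (x * y) = \<phi> x * \<phi> y"
  and field_embedding_one: "\<phi> 1 = 1"
  using \<phi> unfolding field_embedding_def by blast+

lemma field_embedding_zero: "\<phi> 0 = 0"
  using field_embedding_add[of 0 0] by (metis add_0 add_cancel_right_right)

lemma field_embedding_minus: "\<phi> (- x) = - \<phi> x"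
  using field_embedding_add[of x "- x"] by (simp add: field_embedding_zero add.commute eq_neg_iff_add_eq_0)

lemma field_embedding_power: "\<phi> (x ^ n) = \<phi> x ^ n"
  by (induction n) (simp_all add: field_embedding_one field_embedding_mult)

lemma field_embedding_nonzero: "x \<noteq> 0 \<Longrightarrow> \<phi> x \<noteq> 0"
  using field_embedding_mult[of x "inverse x"] by (auto simp: field_embedding_one)

end

subsection \<open>Diagonal quadratic forms\<close>

definition qf_value :: "'a::comm_ring_1 list \<Rightarrow> 'a list \<Rightarrow> 'a" where
  "qf_value cs xs = sum_list (map2 (\<lambda>c x. c * x\<^sup>2) cs xs)"

lemma qf_isotropic_iff_value:
  "qf_isotropic cs \<longleftrightarrow> (\<exists>xs. length xs = length cs \<and> (\<exists>x\<in>set xs. x \<noteq> 0) \<and> qf_value cs xs = 0)"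
  unfolding qf_isotropic_def qf_value_def ..

lemma qf_value_Nil [simp]: "qf_value [] xs = 0"
  by (simp add: qf_value_def)

lemma qf_value_Nil2 [simp]: "qf_value cs [] = 0"
  by (simp add: qf_value_def)

lemma qf_value_Cons_Cons [simp]: "qf_value (c # cs) (x # xs) = c * x\<^sup>2 + qf_value cs xs"
  by (simp add: qf_value_def)

lemma qf_value_append:
  "length xs = length cs \<Longrightarrow> qf_value (cs @ ds) (xs @ ys) = qf_value cs xs + qf_value ds ys"
  by (simp add: qf_value_def)

lemma qf_value_scale: "qf_value (map ((*) t) cs) xs = t * qf_value cs xs"
  by (induction cs xs rule: list_induct2') (simp_all add: algebra_simps)

lemma qf_value_scale_vector: "qf_value cs (map ((*) s) xs) = s\<^sup>2 * qf_value cs xs"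
  by (induction cs xs rule: list_induct2') (simp_all add: algebra_simps power_mult_distrib)

lemma qf_value_zero: "\<forall>x\<in>set xs. x = 0 \<Longrightarrow> qf_value cs xs = 0"
  by (induction cs xs rule: list_induct2') simp_all

lemma qf_value_scale_squares:
  "length ss = length cs \<Longrightarrow> length xs = length cs \<Longrightarrow>
    qf_value (map2 (\<lambda>c s. c * s\<^sup>2) cs ss) xs = qf_value cs (map2 (*) ss xs)"
proof -
  assume "length ss = length cs" "length xs = length cs"
  then have "length cs = length ss" "length ss = length xs"
    by simp_all
  then show ?thesis
    by (induction cs ss xs rule: list_induct3) (simp_all add: power_mult_distrib mult.assoc)
qed

lemma qf_isotropic_append:
  assumes "qf_isotropic (cs @ ds)"
  obtains xs ys where "length xs = length cs" "length ys = length ds"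
    "\<exists>x\<in>set (xs @ ys). x \<noteq> 0" "qf_value cs xs + qf_value ds ys = 0"
proof -
  obtain zs where zs: "length zs = length cs + length ds" "\<exists>x\<in>set zs. x \<noteq> 0"
      "qf_value (cs @ ds) zs = 0"
    using assms unfolding qf_isotropic_iff_value by auto
  show thesis
  proof
    let ?xs = "take (length cs) zs" and ?ys = "drop (length cs) zs"
    show "length ?xs = length cs" "length ?ys = length ds"
      using zs(1) by simp_all
    show "\<exists>x\<in>set (?xs @ ?ys). x \<noteq> 0"
      using zs(2) by simp
    show "qf_value cs ?xs + qf_value ds ?ys = 0"
      using zs(1,3) qf_value_append[of ?xs cs ds ?ys] by simp
  qed
qed

lemma qf_anisotropic_scale:
  assumes "c \<noteq> 0" "qf_anisotropic cs"
  shows "qf_anisotropic (map ((*) c) cs)"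
  using assms unfolding qf_anisotropic_def qf_isotropic_iff_value by (simp add: qf_value_scale)

lemma qf_anisotropic_scale_squares:
  assumes len: "length ss = length cs" and ss: "0 \<notin> set ss" and aniso: "qf_anisotropic cs"
  shows "qf_anisotropic (map2 (\<lambda>c s. c * s\<^sup>2) cs ss)"
  unfolding qf_anisotropic_def qf_isotropic_iff_value
proof clarify
  fix xs x
  assume xs: "length xs = length (map2 (\<lambda>c s. c * s\<^sup>2) cs ss)" "x \<in> set xs" "x \<noteq> 0"
    and zero: "qf_value (map2 (\<lambda>c s. c * s\<^sup>2) cs ss) xs = 0"
  obtain i where i: "i < length xs" "xs ! i = x"
    using xs(2) by (auto simp: in_set_conv_nth)
  have "map2 (*) ss xs ! i \<noteq> 0"
    using i xs(1,3) ss len nth_mem[of i ss] by (auto simp del: nth_mem)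
  moreover have "i < length (map2 (*) ss xs)"
    using i(1) xs(1) len by simp
  ultimately have "\<exists>y\<in>set (map2 (*) ss xs). y \<noteq> 0"
    using nth_mem by blast
  then have "qf_isotropic cs"
    unfolding qf_isotropic_iff_value
    using xs(1) len zero qf_value_scale_squares[of ss cs xs]
    by (intro exI[of _ "map2 (*) ss xs"]) simp
  then show False
    using aniso unfolding qf_anisotropic_def by blast
qed

lemma qf_tensor_binary: "qf_tensor [c1, c2] [d1, d2] = [c1 * d1, c1 * d2, c2 * d1, c2 * d2]"
  unfolding qf_tensor_def by simp

lemma qf_isotropic_quaternary:
  "qf_isotropic [c1, c2, c3, c4] \<longleftrightarrow>
    (\<exists>x1 x2 x3 x4. (x1, x2, x3, x4) \<noteq> (0, 0, 0, 0) \<and>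
      c1 * x1\<^sup>2 + c2 * x2\<^sup>2 + c3 * x3\<^sup>2 + c4 * x4\<^sup>2 = 0)"
proof
  assume "qf_isotropic [c1, c2, c3, c4]"
  then obtain xs where "length xs = length [c1, c2, c3, c4]" "\<exists>x\<in>set xs. x \<noteq> 0"
      "qf_value [c1, c2, c3, c4] xs = 0"
    unfolding qf_isotropic_iff_value by blast
  moreover from this(1) obtain x1 x2 x3 x4 where "xs = [x1, x2, x3, x4]"
    by (auto simp: numeral_eq_Suc length_Suc_conv)
  ultimately show "\<exists>x1 x2 x3 x4. (x1, x2, x3, x4) \<noteq> (0, 0, 0, 0) \<and>
      c1 * x1\<^sup>2 + c2 * x2\<^sup>2 + c3 * x3\<^sup>2 + c4 * x4\<^sup>2 = 0"
    by (auto simp: add.assoc)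
next
  assume "\<exists>x1 x2 x3 x4. (x1, x2, x3, x4) \<noteq> (0, 0, 0, 0) \<and>
      c1 * x1\<^sup>2 + c2 * x2\<^sup>2 + c3 * x3\<^sup>2 + c4 * x4\<^sup>2 = 0"
  then obtain x1 x2 x3 x4 where "(x1, x2, x3, x4) \<noteq> (0, 0, 0, 0)"
      "c1 * x1\<^sup>2 + c2 * x2\<^sup>2 + c3 * x3\<^sup>2 + c4 * x4\<^sup>2 = 0"
    by blast
  then show "qf_isotropic [c1, c2, c3, c4]"
    unfolding qf_isotropic_iff_value
    by (intro exI[of _ "[x1, x2, x3, x4]"]) (auto simp: add.assoc)
qed

lemma qf_isotropic_pfister_iff:
  "qf_isotropic (qf_tensor [1, c] [1, b]) \<longleftrightarrow>
    (\<exists>p q r s. (p, q, r, s) \<noteq> (0, 0, 0, 0) \<and> (p\<^sup>2 + b * q\<^sup>2) + c * (r\<^sup>2 + b * s\<^sup>2) = 0)"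
  by (simp add: qf_tensor_binary qf_isotropic_quaternary algebra_simps)

lemma binary_norm_mult:
  "(p\<^sup>2 + b * q\<^sup>2) * (r\<^sup>2 + b * s\<^sup>2) = (p * r - b * q * s)\<^sup>2 + b * (p * s + q * r)\<^sup>2"
  for p q r s b :: "'a::comm_ring_1"
  by (simp add: power2_eq_square algebra_simps)

text \<open>If both forms were isotropic, \<open>-c\<close> and \<open>-ac\<close> would be norms from \<open>k(\<surd>-b)\<close>, hence so
  would be their quotient \<open>a\<close>; but \<open>\<langle>1,-a\<rangle>\<langle>1,b\<rangle>\<close> is anisotropic exactly when \<open>a\<close> is not a norm.\<close>
lemma pfister_anisotropic_twist:
  fixes a b c :: "'k::field"
  assumes aniso: "qf_anisotropic (qf_tensor [1, - a] [1, b])" and c: "c \<noteq> 0"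
  shows "qf_anisotropic (qf_tensor [1, c] [1, b]) \<or> qf_anisotropic (qf_tensor [1, a * c] [1, b])"
proof (rule ccontr)
  define N where "N p q = p\<^sup>2 + b * q\<^sup>2" for p q
  have aniso_N: "N p q = a * N r s \<Longrightarrow> p = 0 \<and> q = 0 \<and> r = 0 \<and> s = 0" for p q r s
    using aniso unfolding qf_anisotropic_def qf_isotropic_pfister_iff N_def by auto
  have N_zero: "N p q = 0 \<Longrightarrow> p = 0 \<and> q = 0" for p q
    using aniso_N[of p q 0 0] by (simp add: N_def)
  have isotropic_N: "\<exists>p q r s. (p, q, r, s) \<noteq> (0, 0, 0, 0) \<and> N p q = - d * N r s"
    if "qf_isotropic (qf_tensor [1, d] [1, b])" for d
    using that unfolding qf_isotropic_pfister_iff N_def by (simp add: eq_neg_iff_add_eq_0)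
  assume "\<not> ?thesis"
  then have "qf_isotropic (qf_tensor [1, c] [1, b])" "qf_isotropic (qf_tensor [1, a * c] [1, b])"
    unfolding qf_anisotropic_def by simp_all
  then obtain x1 x2 x3 x4 y1 y2 y3 y4 where
      x: "(x1, x2, x3, x4) \<noteq> (0, 0, 0, 0)" "N x1 x2 = - c * N x3 x4" and
      y: "(y1, y2, y3, y4) \<noteq> (0, 0, 0, 0)" "N y1 y2 = - (a * c) * N y3 y4"
    using isotropic_N by metis
  have Nx: "N x1 x2 \<noteq> 0"
  proof
    assume "N x1 x2 = 0"
    moreover from this have "N x3 x4 = 0"
      using x(2) c by simp
    ultimately show False
      using x(1) N_zero[of x1 x2] N_zero[of x3 x4] by simp
  qed
  have Ny: "N y3 y4 \<noteq> 0"
  proof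
    assume "N y3 y4 = 0"
    moreover from this have "N y1 y2 = 0"
      using y(2) by simp
    ultimately show False
      using y(1) N_zero[of y1 y2] N_zero[of y3 y4] by simp
  qed
  have "N (y1 * x3 - b * y2 * x4) (y1 * x4 + y2 * x3) = N y1 y2 * N x3 x4"
    and prod: "N (y3 * x1 - b * y4 * x2) (y3 * x2 + y4 * x1) = N y3 y4 * N x1 x2"
    unfolding N_def by (simp_all only: binary_norm_mult)
  moreover have "N y1 y2 * N x3 x4 = a * (N y3 y4 * N x1 x2)"
    using x(2) y(2) by (simp add: algebra_simps)
  ultimately have "y3 * x1 - b * y4 * x2 = 0 \<and> y3 * x2 + y4 * x1 = 0"
    using aniso_N by metis
  then show False
    using prod Nx Ny by (simp add: N_def)
qed

subsection \<open>Discretely valued fields\<close>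

locale valued_field =
  fixes v :: "'L::field \<Rightarrow> int"
  assumes valuation: "discrete_valuation v"
begin

definition valuation_ring :: "'L set" where
  "valuation_ring = {x. x = 0 \<or> 0 \<le> v x}"

definition maximal_ideal :: "'L set" where
  "maximal_ideal = {x. x = 0 \<or> 0 < v x}"

lemma v_mult: "x \<noteq> 0 \<Longrightarrow> y \<noteq> 0 \<Longrightarrow> v (x * y) = v x + v y"
  using valuation unfolding discrete_valuation_def by blast

lemma v_add: "x \<noteq> 0 \<Longrightarrow> y \<noteq> 0 \<Longrightarrow> x + y \<noteq> 0 \<Longrightarrow> min (v x) (v y) \<le> v (x + y)"
  using valuation unfolding discrete_valuation_def by blast

lemma v_one: "v 1 = 0"
  using v_mult[of 1 1] by simp

lemma v_minus: "v (- x) = v x"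
proof (cases "x = 0")
  case False
  have "v (- 1) = 0"
    using v_mult[of "- 1" "- 1"] v_one by simp
  then show ?thesis
    using v_mult[of "- 1" x] False by simp
qed simp

lemma v_power: "x \<noteq> 0 \<Longrightarrow> v (x ^ n) = int n * v x"
  by (induction n) (simp_all add: v_one v_mult algebra_simps)

lemma v_divide: "x \<noteq> 0 \<Longrightarrow> y \<noteq> 0 \<Longrightarrow> v (x / y) = v x - v y"
  using v_mult[of "x / y" y] by simp

lemma valuation_ring_add: "x \<in> valuation_ring \<Longrightarrow> y \<in> valuation_ring \<Longrightarrow> x + y \<in> valuation_ring"
  unfolding valuation_ring_def using v_add[of x y] by fastforce

lemma valuation_ring_mult: "x \<in> valuation_ring \<Longrightarrow> y \<in> valuation_ring \<Longrightarrow> x * y \<in> valuation_ring"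
  unfolding valuation_ring_def by (cases "x = 0"; cases "y = 0") (auto simp: v_mult)

lemma maximal_ideal_subset: "maximal_ideal \<subseteq> valuation_ring"
  unfolding maximal_ideal_def valuation_ring_def by auto

lemma one_notin_maximal_ideal: "1 \<notin> maximal_ideal"
  unfolding maximal_ideal_def by (simp add: v_one)

lemma maximal_ideal_add: "x \<in> maximal_ideal \<Longrightarrow> y \<in> maximal_ideal \<Longrightarrow> x + y \<in> maximal_ideal"
  unfolding maximal_ideal_def using v_add[of x y] by fastforce

lemma maximal_ideal_minus: "x \<in> maximal_ideal \<Longrightarrow> - x \<in> maximal_ideal"
  unfolding maximal_ideal_def by (simp add: v_minus)

lemma maximal_ideal_mult: "x \<in> maximal_ideal \<Longrightarrow> y \<in> valuation_ring \<Longrightarrow> x * y \<in> maximal_ideal"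
  unfolding maximal_ideal_def valuation_ring_def by (cases "x = 0"; cases "y = 0") (auto simp: v_mult)

lemma unit_add_maximal_ideal:
  assumes A: "A \<noteq> 0" "v A = 0" and E: "E \<in> maximal_ideal"
  shows "A + E \<noteq> 0 \<and> v (A + E) = 0"
proof (cases "E = 0")
  case False
  then have vE: "0 < v E"
    using E unfolding maximal_ideal_def by simp
  have nonzero: "A + E \<noteq> 0"
  proof
    assume "A + E = 0"
    then have "A = - E"
      by (simp add: eq_neg_iff_add_eq_0)
    then show False
      using vE A(2) v_minus by simp
  qed
  have "min (v A) (v E) \<le> v (A + E)"
    using v_add A(1) False nonzero by blast
  moreover have "min (v (A + E)) (v (- E)) \<le> v A"
    using v_add[of "A + E" "- E"] nonzero False A(1) by simp
  ultimately show ?thesis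
    using A(2) vE nonzero by (simp add: v_minus)
qed (use A in simp)

lemma divide_mem_valuation_ring:
  "w \<noteq> 0 \<Longrightarrow> y = 0 \<or> v w \<le> v y \<Longrightarrow> y / w \<in> valuation_ring"
  unfolding valuation_ring_def by (cases "y = 0") (auto simp: v_divide)

lemma even_valuation_unit_times_square:
  assumes t: "t \<noteq> 0" "v t = 1" and x: "x \<noteq> 0" "0 \<le> v x" "even (v x)"
  obtains u w where "x = u * w\<^sup>2" "u \<noteq> 0" "v u = 0" "w \<noteq> 0"
proof -
  obtain m where m: "v x = 2 * int m"
  proof -
    obtain k where "v x = 2 * k"
      using x(3) by (elim evenE)
    then show thesis
      using that[of "nat k"] x(2) by simp
  qed
  define w where "w = t ^ m"
  have w: "w \<noteq> 0" "v (w\<^sup>2) = v x"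
    using t m by (simp_all add: w_def v_power)
  show thesis
  proof
    show "x = x / w\<^sup>2 * w\<^sup>2" "x / w\<^sup>2 \<noteq> 0" "w \<noteq> 0"
      using w x(1) by simp_all
    show "v (x / w\<^sup>2) = 0"
      using w x(1) by (simp add: v_divide)
  qed
qed

end

subsection \<open>Springer's theorem\<close>

locale residue_section = valued_field v
  for v :: "'L::field \<Rightarrow> int" +
  fixes \<iota> :: "'k::field \<Rightarrow> 'L"
  assumes embedding: "field_embedding \<iota>"
    and v_\<iota>: "c \<noteq> 0 \<Longrightarrow> v (\<iota> c) = 0"
    and residue_exists: "x \<in> valuation_ring \<Longrightarrow> \<exists>c. x - \<iota> c \<in> maximal_ideal"
begin

lemmas \<iota>_add = field_embedding_add[OF embedding]
  and \<iota>_mult = field_embedding_mult[OF embedding]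
  and \<iota>_one = field_embedding_one[OF embedding]
  and \<iota>_zero = field_embedding_zero[OF embedding]
  and \<iota>_minus = field_embedding_minus[OF embedding]
  and \<iota>_power = field_embedding_power[OF embedding]
  and \<iota>_nonzero = field_embedding_nonzero[OF embedding]

lemma \<iota>_mem_valuation_ring: "\<iota> c \<in> valuation_ring"
  unfolding valuation_ring_def by (cases "c = 0") (simp_all add: v_\<iota> \<iota>_zero)

definition has_residues :: "'L list \<Rightarrow> 'k list \<Rightarrow> bool" where
  "has_residues xs cs \<longleftrightarrow> list_all2 (\<lambda>x c. x - \<iota> c \<in> maximal_ideal) xs cs"

lemma has_residues_map_\<iota>: "has_residues (map \<iota> cs) cs"
  unfolding has_residues_def maximal_ideal_def by (simp add: list_all2_conv_all_nth)

lemma residues_exist: "set xs \<subseteq> valuation_ring \<Longrightarrow> \<exists>cs. has_residues xs cs"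
proof (induction xs)
  case (Cons x xs)
  obtain c where "x - \<iota> c \<in> maximal_ideal"
    using residue_exists Cons.prems by auto
  moreover obtain cs where "has_residues xs cs"
    using Cons by auto
  ultimately have "has_residues (x # xs) (c # cs)"
    unfolding has_residues_def by simp
  then show ?case ..
qed (auto simp: has_residues_def)

lemma square_term_residue:
  assumes C: "C - \<iota> d \<in> maximal_ideal" and z: "z - \<iota> r \<in> maximal_ideal"
  shows "C * z\<^sup>2 - \<iota> (d * r\<^sup>2) \<in> maximal_ideal"
proof -
  have z_int: "z \<in> valuation_ring"
    using valuation_ring_add[of "z - \<iota> r" "\<iota> r"] z maximal_ideal_subset \<iota>_mem_valuation_ring by auto
  have "(C - \<iota> d) * z\<^sup>2 \<in> maximal_ideal"
    using maximal_ideal_mult[OF C] valuation_ring_mult[OF z_int z_int] by (simp add: power2_eq_square)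
  moreover have "(z - \<iota> r) * ((z + \<iota> r) * \<iota> d) \<in> maximal_ideal"
    using maximal_ideal_mult[OF z] valuation_ring_add[OF z_int \<iota>_mem_valuation_ring]
      valuation_ring_mult \<iota>_mem_valuation_ring by blast
  moreover have "C * z\<^sup>2 - \<iota> (d * r\<^sup>2) = (C - \<iota> d) * z\<^sup>2 + (z - \<iota> r) * ((z + \<iota> r) * \<iota> d)"
    by (simp add: \<iota>_mult \<iota>_power algebra_simps power2_eq_square)
  ultimately show ?thesis
    using maximal_ideal_add by simp
qed

lemma qf_value_residue:
  "has_residues Cs ds \<Longrightarrow> has_residues zs rs \<Longrightarrow> qf_value Cs zs - \<iota> (qf_value ds rs) \<in> maximal_ideal"
  unfolding has_residues_def
proof (induction Cs ds arbitrary: zs rs rule: list_all2_induct)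
  case Nil
  then show ?case
    by (simp add: \<iota>_zero maximal_ideal_def)
next
  case (Cons C Cs d ds)
  show ?case
  proof (cases zs)
    case Nil
    then show ?thesis
      using Cons.prems by (simp add: \<iota>_zero maximal_ideal_def)
  next
    case (Cons z zs')
    with Cons.prems obtain r rs' where rs: "rs = r # rs'" and r: "z - \<iota> r \<in> maximal_ideal"
        and rs': "list_all2 (\<lambda>x c. x - \<iota> c \<in> maximal_ideal) zs' rs'"
      by (auto simp: list_all2_Cons1)
    have "(C * z\<^sup>2 - \<iota> (d * r\<^sup>2)) + (qf_value Cs zs' - \<iota> (qf_value ds rs')) \<in> maximal_ideal"
      using maximal_ideal_add square_term_residue[OF Cons.hyps(1) r] Cons.IH[OF rs'] by blast
    moreover have "qf_value (C # Cs) (z # zs') - \<iota> (qf_value (d # ds) (r # rs')) =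
        (C * z\<^sup>2 - \<iota> (d * r\<^sup>2)) + (qf_value Cs zs' - \<iota> (qf_value ds rs'))"
      by (simp add: \<iota>_add)
    ultimately show ?thesis
      using \<open>zs = z # zs'\<close> rs by (simp only:)
  qed
qed

text \<open>Scale a nonzero vector by an entry of least valuation: the result is integral with a nonzero
  residue vector, so by anisotropy of the residue form its value is a unit.\<close>
lemma anisotropic_value_even:
  assumes Cs: "has_residues Cs ds" and aniso: "qf_anisotropic ds"
    and xs: "length xs = length Cs" "\<exists>x\<in>set xs. x \<noteq> 0"
  shows "qf_value Cs xs \<noteq> 0 \<and> even (v (qf_value Cs xs))"
proof -
  define I where "I = {i. i < length xs \<and> xs ! i \<noteq> 0}"
  have "finite I" "I \<noteq> {}"
    using xs(2) by (auto simp: I_def in_set_conv_nth)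
  then obtain i where i: "i \<in> I" "\<not> (\<exists>j\<in>I. v (xs ! j) < v (xs ! i))"
    using arg_min_if_finite[of I "\<lambda>j. v (xs ! j)"] by blast
  define w where "w = xs ! i"
  have w: "w \<noteq> 0"
    using i(1) by (simp add: I_def w_def)
  define zs where "zs = map (\<lambda>x. x / w) xs"
  have "xs ! j / w \<in> valuation_ring" if "j < length xs" for j
  proof (cases "xs ! j = 0")
    case False
    then have "v w \<le> v (xs ! j)"
      using i(2) that by (auto simp: I_def w_def)
    then show ?thesis
      using divide_mem_valuation_ring[OF w] by blast
  qed (simp add: valuation_ring_def)
  then have "set zs \<subseteq> valuation_ring"
    by (auto simp: zs_def in_set_conv_nth)
  then obtain rs where rs: "has_residues zs rs"
    using residues_exist by blast
  have len: "length zs = length rs" "length Cs = length ds"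
    using rs Cs unfolding has_residues_def by (simp_all add: list_all2_lengthD)
  have "1 - \<iota> (rs ! i) \<in> maximal_ideal"
    using rs i(1) w unfolding has_residues_def
    by (auto simp: I_def zs_def w_def list_all2_conv_all_nth)
  then have "rs ! i \<noteq> 0"
    using one_notin_maximal_ideal by (auto simp: \<iota>_zero)
  moreover have "i < length rs"
    using i(1) len by (simp add: I_def zs_def)
  ultimately have "\<exists>r\<in>set rs. r \<noteq> 0"
    using nth_mem by blast
  moreover have "length rs = length ds"
    using len xs(1) by (simp add: zs_def)
  ultimately have "qf_value ds rs \<noteq> 0"
    using aniso unfolding qf_anisotropic_def qf_isotropic_iff_value by blast
  then have "qf_value Cs zs \<noteq> 0 \<and> v (qf_value Cs zs) = 0"
    using unit_add_maximal_ideal[OF _ _ qf_value_residue[OF Cs rs], of "\<iota> (qf_value ds rs)"]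
    by (simp add: \<iota>_nonzero v_\<iota>)
  moreover have "qf_value Cs xs = w\<^sup>2 * qf_value Cs zs"
  proof -
    have "xs = map ((*) w) zs"
      using w by (simp add: zs_def map_idI)
    then show ?thesis
      using qf_value_scale_vector by metis
  qed
  ultimately show ?thesis
    using w by (simp add: v_mult v_power)
qed

theorem anisotropic_uniformizer_sum:
  assumes t: "t \<noteq> 0" "odd (v t)"
    and Cs: "has_residues Cs ds" "qf_anisotropic ds"
    and Cs': "has_residues Cs' ds'" "qf_anisotropic ds'"
  shows "qf_anisotropic (map ((*) t) Cs @ Cs')"
  unfolding qf_anisotropic_def
proof
  assume "qf_isotropic (map ((*) t) Cs @ Cs')"
  then obtain xs ys where len: "length xs = length Cs" "length ys = length Cs'"
      and nonzero: "\<exists>x\<in>set (xs @ ys). x \<noteq> 0"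
      and sum: "t * qf_value Cs xs + qf_value Cs' ys = 0"
    by (elim qf_isotropic_append) (simp add: qf_value_scale)
  show False
  proof (cases "\<exists>x\<in>set xs. x \<noteq> 0")
    case True
    then have P: "qf_value Cs xs \<noteq> 0" "even (v (qf_value Cs xs))"
      using anisotropic_value_even[OF Cs len(1)] by simp_all
    have Q: "qf_value Cs' ys = - (t * qf_value Cs xs)"
      using sum by (simp add: eq_neg_iff_add_eq_0 add.commute)
    have "\<exists>y\<in>set ys. y \<noteq> 0"
    proof (rule ccontr)
      assume "\<not> ?thesis"
      then have "qf_value Cs' ys = 0"
        by (simp add: qf_value_zero)
      then show False
        using Q P(1) t(1) by simp
    qed
    then have "even (v (qf_value Cs' ys))"
      using anisotropic_value_even[OF Cs' len(2)] by simp
    then show False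
      using Q P t by (simp add: v_minus v_mult)
  next
    case False
    then have "qf_value Cs xs = 0"
      by (simp add: qf_value_zero)
    then have "qf_value Cs' ys = 0"
      using sum by simp
    moreover have "\<exists>y\<in>set ys. y \<noteq> 0"
      using False nonzero by auto
    ultimately show False
      using anisotropic_value_even[OF Cs' len(2)] by simp
  qed
qed

lemma anisotropic_pfister_sum:
  assumes t: "t \<noteq> 0" "odd (v t)" and w: "w \<noteq> 0" and U: "U - \<iota> e \<in> maximal_ideal"
    and a: "qf_anisotropic (qf_tensor [1, - a] [1, b])"
    and e: "qf_anisotropic (qf_tensor [1, e] [1, b])"
  shows "qf_anisotropic (qf_tensor [t, - \<iota> a * t, - 1, - (U * w\<^sup>2)] [1, \<iota> b])"
proof -
  let ?Cs = "map \<iota> [1, b, - a, - (a * b)]" and ?Cs' = "[- 1, - \<iota> b, - U, - (U * \<iota> b)]"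
  have "qf_anisotropic [1, b, - a, - (a * b)]"
    using a by (simp add: qf_tensor_binary)
  moreover have "qf_anisotropic [- 1, - b, - e, - (e * b)]"
    using qf_anisotropic_scale[OF _ e, of "- 1"] by (simp add: qf_tensor_binary)
  moreover have "has_residues ?Cs' [- 1, - b, - e, - (e * b)]"
  proof -
    have "- U - \<iota> (- e) \<in> maximal_ideal"
      using maximal_ideal_minus[OF U] by (simp add: \<iota>_minus)
    moreover have "- (U * \<iota> b) - \<iota> (- (e * b)) = - ((U - \<iota> e) * \<iota> b)"
      by (simp add: \<iota>_minus \<iota>_mult algebra_simps)
    then have "- (U * \<iota> b) - \<iota> (- (e * b)) \<in> maximal_ideal"
      using maximal_ideal_minus[OF maximal_ideal_mult[OF U \<iota>_mem_valuation_ring]] by simp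
    moreover have "0 \<in> maximal_ideal"
      by (simp add: maximal_ideal_def)
    ultimately show ?thesis
      by (simp add: has_residues_def \<iota>_minus \<iota>_one)
  qed
  ultimately have "qf_anisotropic (map ((*) t) ?Cs @ ?Cs')"
    using anisotropic_uniformizer_sum[OF t has_residues_map_\<iota>] by blast
  then have "qf_anisotropic (map2 (\<lambda>c s. c * s\<^sup>2) (map ((*) t) ?Cs @ ?Cs') [1, 1, 1, 1, 1, 1, w, w])"
    using w by (intro qf_anisotropic_scale_squares) auto
  also have "map2 (\<lambda>c s. c * s\<^sup>2) (map ((*) t) ?Cs @ ?Cs') [1, 1, 1, 1, 1, 1, w, w] =
      qf_tensor [t, - \<iota> a * t, - 1, - (U * w\<^sup>2)] [1, \<iota> b]"
    by (simp add: qf_tensor_def \<iota>_one \<iota>_minus \<iota>_mult algebra_simps)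
  finally show ?thesis .
qed

lemma unit_has_nonzero_residue:
  assumes "u \<noteq> 0" "v u = 0"
  obtains c where "c \<noteq> 0" "u - \<iota> c \<in> maximal_ideal"
proof -
  obtain c where c: "u - \<iota> c \<in> maximal_ideal"
    using residue_exists[of u] assms by (auto simp: valuation_ring_def)
  moreover have "c \<noteq> 0"
    using c assms by (auto simp: \<iota>_zero maximal_ideal_def)
  ultimately show thesis
    using that by blast
qed

end

lemma residue_section_constK:
  assumes \<phi>: "field_embedding \<phi>" and v: "unramified_prime_above_T \<phi> v"
    and residue: "residue_field_is_k \<phi> v"
  shows "residue_section v (\<lambda>c. \<phi> (constK c))"
proof -
  interpret valued_field v
    using v unfolding unramified_prime_above_T_def by unfold_locales blast
  show ?thesis
  proof
    show \<iota>: "field_embedding (\<lambda>c. \<phi> (constK c))"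
      using field_embedding_comp[OF field_embedding_constK \<phi>] .
    show "v (\<phi> (constK c)) = 0" if "c \<noteq> 0" for c
      using v that unfolding unramified_prime_above_T_def by (simp add: constK_nonzero ordT_constK)
    show "\<exists>c. x - \<phi> (constK c) \<in> maximal_ideal" if x: "x \<in> valuation_ring" for x
    proof (cases "x = 0")
      case True
      then show ?thesis
        using field_embedding_zero[OF \<iota>] by (auto simp: maximal_ideal_def)
    next
      case False
      with x residue obtain c where
        "x = \<phi> (constK c) \<or> (x - \<phi> (constK c) \<noteq> 0 \<and> 0 < v (x - \<phi> (constK c)))"
        unfolding residue_field_is_k_def valuation_ring_def by auto
      then show ?thesis
        unfolding maximal_ideal_def by auto
    qed
  qed
qed

lemma unramified_prime_uniformizer:
  assumes "field_embedding \<phi>" "unramified_prime_above_T \<phi> v"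
  shows "\<phi> varT \<noteq> 0" "v (\<phi> varT) = 1"
  using assms field_embedding_nonzero[OF assms(1) varT_nonzero]
  unfolding unramified_prime_above_T_def by (simp_all add: varT_nonzero ordT_varT)

theorem lemma6p1:
  fixes a b :: "'k::field_char_0"
    and \<phi> :: "'k poly fract \<Rightarrow> 'L::field"
    and v :: "'L \<Rightarrow> int"
    and g :: "'k poly fract"
  assumes "a \<noteq> 0" and "b \<noteq> 0"
    and "qf_anisotropic (qf_tensor [1, - a] [1, b])"
    and "finite_extension \<phi>"
    and "unramified_prime_above_T \<phi> v"
    and "residue_field_is_k \<phi> v"
    and "g \<noteq> 0" and "0 \<le> ordT g" and "even (ordT g)"
  shows "qf_anisotropic (qf_tensor [\<phi> varT, - \<phi> (constK a) * \<phi> varT, - 1, - \<phi> g] [1, \<phi> (constK b)])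
       \<or> qf_anisotropic (qf_tensor [\<phi> varT, - \<phi> (constK a) * \<phi> varT, - 1, - \<phi> (constK a) * \<phi> g] [1, \<phi> (constK b)])"
proof -
  have \<phi>: "field_embedding \<phi>"
    using assms(4) unfolding finite_extension_def by blast
  interpret residue_section v "\<lambda>c. \<phi> (constK c)"
    using residue_section_constK[OF \<phi> assms(5,6)] .
  have uniformizer: "\<phi> varT \<noteq> 0" "v (\<phi> varT) = 1"
    using unramified_prime_uniformizer[OF \<phi> assms(5)] .
  then have t: "\<phi> varT \<noteq> 0" "odd (v (\<phi> varT))"
    by simp_all
  have "\<phi> g \<noteq> 0" "v (\<phi> g) = ordT g"
    using assms(5,7) field_embedding_nonzero[OF \<phi>] unfolding unramified_prime_above_T_def by simp_all
  then obtain u w where u: "\<phi> g = u * w\<^sup>2" "u \<noteq> 0" "v u = 0" and w: "w \<noteq> 0"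
    using even_valuation_unit_times_square[OF uniformizer] assms(8,9) by metis
  obtain c where c: "c \<noteq> 0" "u - \<phi> (constK c) \<in> maximal_ideal"
    using unit_has_nonzero_residue[OF u(2,3)] by blast
  from pfister_anisotropic_twist[OF assms(3) c(1)] show ?thesis
  proof
    assume "qf_anisotropic (qf_tensor [1, c] [1, b])"
    then show ?thesis
      using anisotropic_pfister_sum[OF t w c(2) assms(3)] u(1) by simp
  next
    assume "qf_anisotropic (qf_tensor [1, a * c] [1, b])"
    moreover have "\<phi> (constK a) * u - \<phi> (constK (a * c)) \<in> maximal_ideal"
      using maximal_ideal_mult[OF c(2) \<iota>_mem_valuation_ring, of a] by (simp add: \<iota>_mult algebra_simps)
    ultimately have "qf_anisotropic (qf_tensor [\<phi> varT, - \<phi> (constK a) * \<phi> varT, - 1,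
        - (\<phi> (constK a) * u * w\<^sup>2)] [1, \<phi> (constK b)])"
      using anisotropic_pfister_sum[OF t w _ assms(3)] by blast
    then show ?thesis
      using u(1) by (simp add: mult.assoc)
  qed
qed

end
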